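(* Let $h:\mathbb{R}^k\times\mathbb{R}^k\to[0,\infty)$ be a volume-regular generalized distance function, with associated functions $\Phi$, $\delta_t$, $\delta$ and constants as in the context, and let $\xi\in\mathbb{R}^k$ be a point at which the comparability condition of volume-regularity holds, i.e. there are $c,C>0$ and $\epsilon>0$ with $c\,\delta(x,\xi)\le \delta_t(x,\xi)\le C\,\delta(x,\xi)$ for almost every $x$ and all $0<t<\epsilon$. Let $X_1,X_2,X_3$ be i.i.d. random vectors in $\mathbb{R}^k$ with Lebesgue density $f$, and $Y_1,Y_2,Y_3$ i.i.d. random vectors in $\mathbb{R}^k$ with Lebesgue density $g$, where $X_i$ and $Y_j$ are independent for all $i,j$. Assume that $f$ and $g$ are Lebesgue differentiable with respect to $h$ at almost every point of $\mathbb{R}^k$ and have uniformly bounded centered oscillations with respect to $h$. Assume further that $f\cdot\delta(\cdot,\xi)$, $g\cdot\delta(\cdot,\xi)$, $f^2\cdot\delta(\cdot,\xi)$, $g^2\cdot\delta(\cdot,\xi)\in L^1(\mathbb{R}^k)$. Then $$f=g \text{ (a.e.)}\quad\Longleftrightarrow\quad h(X_1,X_2)\overset{\mathcal{D}}{=}h(Y_1,Y_2)\overset{\mathcal{D}}{=}h(X_3,Y_3).$$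
   Context: A generalized distance function is a function $h:\mathbb{R}^k\times\mathbb{R}^k\to[0,\infty)$ with $h(x,y)=0\iff x=y$ (no symmetry or triangle inequality assumed). The $h$-ball is $B_t^{(h)}(x)=\{y\in\mathbb{R}^k: h(x,y)<t\}$ and $\Phi(x,t)=\mu(B_t^{(h)}(x))$, where $\mu$ is Lebesgue measure. $h$ is called volume-regular if: for some $\epsilon>0$, $\Phi$ is well defined on $\mathbb{R}^k\times[0,\epsilon)$ (small balls are measurable); $\lim_{t\to0^+}\Phi(x,t)=0$; for some $\epsilon>0$ and all $0<t<\epsilon$, $0<\Phi(x,t)<\infty$ for almost every $x$; and there exist at least one point $y\in\mathbb{R}^k$, an $\epsilon>0$, a function $\delta:\mathbb{R}^k\times\mathbb{R}^k\to(0,\infty)$ and constants $c,C>0$ such that for almost every $x$ and all $0<t<\epsilon$, $c\,\delta(x,y)\le\delta_t(x,y)\le C\,\delta(x,y)$, where $\delta_t(x,y):=\Phi(x,t)/\Phi(y,t)$. A function $f\in L^1_{loc}(\mathbb{R}^k)$ is Lebesgue differentiable with respect to $h$ at $x$ if $\lim_{t\to0^+}\frac{1}{\Phi(x,t)}\int_{B_t^{(h)}(x)}|f(y)-f(x)|\,dy=0$. The centered oscillation of $f$ at $x$ on scale $\epsilon$ is $A_f^{(h)}(x,\epsilon)=\sup_{0<t<\epsilon}\frac{1}{\Phi(x,t)}\int_{B_t^{(h)}(x)}|f(y)-f(x)|\,dy$; it is uniformly bounded (on scale $\epsilon$) if there is $C>0$ with $A_f^{(h)}(x,\epsilon)<C$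 for almost every $x$, for some $\epsilon>0$. *)

theory Defs
  imports "HOL-Probability.Probability"
begin

definition gen_dist :: "('a::euclidean_space \<Rightarrow> 'a \<Rightarrow> real) \<Rightarrow> bool" where
  "gen_dist h \<longleftrightarrow> (\<forall>x y. 0 \<le> h x y \<and> (h x y = 0 \<longleftrightarrow> x = y))"

definition hball :: "('a::euclidean_space \<Rightarrow> 'a \<Rightarrow> real) \<Rightarrow> 'a \<Rightarrow> real \<Rightarrow> 'a set" where
  "hball h x t = {y. h x y < t}"

definition Phi :: "('a::euclidean_space \<Rightarrow> 'a \<Rightarrow> real) \<Rightarrow> 'a \<Rightarrow> real \<Rightarrow> ennreal" where
  "Phi h x t = emeasure lebesgue (hball h x t)"

definition delta_t :: "('a::euclidean_space \<Rightarrow> 'a \<Rightarrow> real) \<Rightarrow> real \<Rightarrow> 'a \<Rightarrow> 'a \<Rightarrow> real" where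
  "delta_t h t x y = enn2real (Phi h x t) / enn2real (Phi h y t)"

definition vr_comparable ::
  "('a::euclidean_space \<Rightarrow> 'a \<Rightarrow> real) \<Rightarrow> 'a \<Rightarrow> ('a \<Rightarrow> 'a \<Rightarrow> real) \<Rightarrow> bool" where
  "vr_comparable h y \<delta> \<longleftrightarrow> (\<forall>a b. 0 < \<delta> a b) \<and>
     (\<exists>\<epsilon>>0. \<exists>c>0. \<exists>C>0. AE x in lebesgue. \<forall>t. 0 < t \<and> t < \<epsilon> \<longrightarrow>
        c * \<delta> x y \<le> delta_t h t x y \<and> delta_t h t x y \<le> C * \<delta> x y)"

definition volume_regular :: "('a::euclidean_space \<Rightarrow> 'a \<Rightarrow> real) \<Rightarrow> bool" where
  "volume_regular h \<longleftrightarrow>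
     gen_dist h \<and>
     (\<exists>\<epsilon>>0. \<forall>x t. 0 \<le> t \<and> t < \<epsilon> \<longrightarrow> hball h x t \<in> sets lebesgue) \<and>
     (\<forall>x. ((\<lambda>t. Phi h x t) \<longlongrightarrow> 0) (at_right 0)) \<and>
     (\<exists>\<epsilon>>0. \<forall>t. 0 < t \<and> t < \<epsilon> \<longrightarrow> (AE x in lebesgue. 0 < Phi h x t \<and> Phi h x t < \<infinity>)) \<and>
     (\<exists>y \<delta>. vr_comparable h y \<delta>)"

definition locally_integrable :: "('a::euclidean_space \<Rightarrow> real) \<Rightarrow> bool" where
  "locally_integrable f \<longleftrightarrow> (\<forall>K. compact K \<longrightarrow> set_integrable lebesgue K f)"

definition ball_mean_dev ::
  "('a::euclidean_space \<Rightarrow> 'a \<Rightarrow> real) \<Rightarrow> ('a \<Rightarrow> real) \<Rightarrow> 'a \<Rightarrow> real \<Rightarrow> ennreal" where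
  "ball_mean_dev h f x t =
     (\<integral>\<^sup>+ y \<in> hball h x t. ennreal \<bar>f y - f x\<bar> \<partial>lebesgue) / Phi h x t"

definition lebesgue_differentiable_at ::
  "('a::euclidean_space \<Rightarrow> 'a \<Rightarrow> real) \<Rightarrow> ('a \<Rightarrow> real) \<Rightarrow> 'a \<Rightarrow> bool" where
  "lebesgue_differentiable_at h f x \<longleftrightarrow>
     locally_integrable f \<and> ((\<lambda>t. ball_mean_dev h f x t) \<longlongrightarrow> 0) (at_right 0)"

definition centered_osc ::
  "('a::euclidean_space \<Rightarrow> 'a \<Rightarrow> real) \<Rightarrow> ('a \<Rightarrow> real) \<Rightarrow> 'a \<Rightarrow> real \<Rightarrow> ennreal" where
  "centered_osc h f x \<epsilon> = (SUP t \<in> {0<..<\<epsilon>}. ball_mean_dev h f x t)"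

definition osc_uniformly_bounded ::
  "('a::euclidean_space \<Rightarrow> 'a \<Rightarrow> real) \<Rightarrow> ('a \<Rightarrow> real) \<Rightarrow> bool" where
  "osc_uniformly_bounded h f \<longleftrightarrow>
     (\<exists>\<epsilon>>0. \<exists>C>0. AE x in lebesgue. centered_osc h f x \<epsilon> < ennreal C)"

end

theory Submission
  imports Defs
begin

text \<open>
  Write \<open>I\<^sub>q(t, x)\<close> for the integral of \<open>q\<close> over the ball \<open>B\<^sub>t(x)\<close> and \<open>\<Phi>\<^sub>t(x)\<close> for its
  volume. For independent \<open>X \<sim> p\<close> and \<open>Y \<sim> q\<close>, Fubini gives \<open>P(h(X, Y) < t) = \<integral> p I\<^sub>q(t, \<cdot>)\<close>,
  so equality of the three laws means \<open>\<integral> f I\<^sub>f + g I\<^sub>g - 2 f I\<^sub>g = 0\<close> for every \<open>t\<close>. Replacing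
  \<open>I\<^sub>q(t, x)\<close> by \<open>\<Phi>\<^sub>t(x) q(x)\<close> turns this integrand into \<open>\<Phi>\<^sub>t (f - g)\<^sup>2\<close>, up to an error
  bounded by \<open>\<Phi>\<^sub>t\<close> times the mean oscillations of \<open>f\<close> and \<open>g\<close> on \<open>B\<^sub>t(x)\<close>. After division by
  \<open>\<Phi>\<^sub>t(\<xi>)\<close>, comparability pins \<open>\<Phi>\<^sub>t / \<Phi>\<^sub>t(\<xi>)\<close> between \<open>c \<delta>(\<cdot>, \<xi>)\<close> and \<open>C \<delta>(\<cdot>, \<xi>)\<close>.
  Hence the error is dominated by a multiple of \<open>(f + g) \<delta>(\<cdot>, \<xi>)\<close> and vanishes as \<open>t \<rightarrow> 0\<close> by
  Lebesgue differentiability, while the main term \<open>\<integral> \<Phi>\<^sub>t / \<Phi>\<^sub>t(\<xi>) (f - g)\<^sup>2\<close> stays above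
  \<open>c / C\<close> times its value at any fixed radius. So that value is \<open>0\<close> and \<open>f = g\<close> almost everywhere.
  Conversely, the laws depend on the densities only up to null sets.
\<close>

section \<open>Balls of a measurable generalized distance\<close>

lemma borel_measurable_pair_lborel:
  "f \<in> borel_measurable (borel \<Otimes>\<^sub>M borel) \<Longrightarrow> f \<in> borel_measurable (lborel \<Otimes>\<^sub>M lborel)"
  by (subst measurable_cong_sets[OF sets_pair_measure_cong[OF sets_lborel sets_lborel] refl])

locale measurable_hdist =
  fixes h :: "'a::euclidean_space \<Rightarrow> 'a \<Rightarrow> real"
  assumes h_meas: "(\<lambda>(x, y). h x y) \<in> borel_measurable (borel \<Otimes>\<^sub>M borel)"
begin

lemma sets_hdist_less: "{z. h (fst z) (snd z) < t} \<in> sets (lborel \<Otimes>\<^sub>M lborel)"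
proof -
  have [measurable]: "(\<lambda>(x, y). h x y) \<in> borel_measurable (lborel \<Otimes>\<^sub>M lborel)"
    using h_meas by (rule borel_measurable_pair_lborel)
  have "{z \<in> space (lborel \<Otimes>\<^sub>M lborel). (\<lambda>(x, y). h x y) z < t} \<in> sets (lborel \<Otimes>\<^sub>M lborel)"
    by measurable
  then show ?thesis by (simp add: space_pair_measure case_prod_beta)
qed

lemma sets_hball: "hball h x t \<in> sets lborel"
  using sets_Pair1[OF sets_hdist_less[of t], of x] by (simp add: hball_def vimage_def)

lemma borel_measurable_measure_hball:
  "(\<lambda>x. measure lebesgue (hball h x t)) \<in> borel_measurable lborel"
proof -
  have "(\<lambda>x. measure lborel (hball h x t)) \<in> borel_measurable lborel"
    using sets_hdist_less[of t]
    by (intro lborel.measurable_measure) (auto simp: hball_def space_pair_measure)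
  then show ?thesis using sets_hball by simp
qed

end

definition hball_integral ::
  "('a::euclidean_space \<Rightarrow> 'a \<Rightarrow> real) \<Rightarrow> ('a \<Rightarrow> real) \<Rightarrow> real \<Rightarrow> 'a \<Rightarrow> real"
  where "hball_integral h q t x = (LINT y:hball h x t|lebesgue. q y)"

context measurable_hdist
begin

lemma hball_integral_eq_lborel_integral:
  "q \<in> borel_measurable lborel \<Longrightarrow>
     hball_integral h q t x = (\<integral>y. indicator (hball h x t) y * q y \<partial>lborel)"
  unfolding hball_integral_def set_lebesgue_integral_def
  using sets_hball by (subst integral_completion) auto

lemma borel_measurable_hball_integral:
  assumes [measurable]: "q \<in> borel_measurable lborel"
  shows "hball_integral h q t \<in> borel_measurable lborel"
proof -
  have [measurable]: "{z. h (fst z) (snd z) < t} \<in> sets (lborel \<Otimes>\<^sub>M lborel)"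
    by (rule sets_hdist_less)
  have "(\<lambda>x. \<integral>y. indicator {z. h (fst z) (snd z) < t} (x, y) * q y \<partial>lborel) \<in> borel_measurable lborel"
    by measurable
  then show ?thesis
    by (simp add: hball_integral_eq_lborel_integral[OF assms, abs_def] hball_def indicator_def)
qed

lemma hball_integral_nonneg:
  "q \<in> borel_measurable lborel \<Longrightarrow> (\<And>y. 0 \<le> q y) \<Longrightarrow> 0 \<le> hball_integral h q t x"
  by (simp add: hball_integral_eq_lborel_integral integral_nonneg_AE)

lemma nn_integral_hball_eq_hball_integral:
  assumes "integrable lborel q" and "\<And>y. 0 \<le> q y"
  shows "(\<integral>\<^sup>+y. ennreal (q y) * indicator (hball h x t) y \<partial>lborel) = ennreal (hball_integral h q t x)"
  unfolding hball_integral_eq_lborel_integral[OF borel_measurable_integrable[OF assms(1)]]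
  using integrable_mult_indicator[OF sets_hball assms(1)] assms(2)
  by (subst nn_integral_eq_integral[symmetric])
     (auto simp: ennreal_mult' mult.commute intro!: nn_integral_cong split: split_indicator)

lemma abs_hball_integral_le:
  assumes "integrable lborel q"
  shows "\<bar>hball_integral h q t x\<bar> \<le> (\<integral>y. \<bar>q y\<bar> \<partial>lborel)"
proof -
  have "integrable lborel (\<lambda>y. indicator (hball h x t) y * q y)"
    using integrable_mult_indicator[OF sets_hball assms] by simp
  then show ?thesis
    unfolding hball_integral_eq_lborel_integral[OF borel_measurable_integrable[OF assms]]
    using assms by (intro integral_abs_bound_integral) (auto simp: abs_mult indicator_def)
qed

lemma integrable_mult_hball_integral:
  assumes p: "integrable lborel p" and q: "integrable lborel q"
  shows "integrable lebesgue (\<lambda>x. p x * hball_integral h q t x)"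
proof -
  have [measurable]: "p \<in> borel_measurable lborel" "hball_integral h q t \<in> borel_measurable lborel"
    using p borel_measurable_hball_integral[OF borel_measurable_integrable[OF q]] by auto
  have "integrable lborel (\<lambda>x. p x * hball_integral h q t x)"
    using integrable_mult_left[OF integrable_abs[OF p], of "\<integral>y. \<bar>q y\<bar> \<partial>lborel"]
    by (rule Bochner_Integration.integrable_bound)
       (auto simp: abs_mult intro!: mult_left_mono abs_hball_integral_le[OF q])
  then show ?thesis by (simp add: integrable_completion)
qed

lemma hball_integral_deviation_le:
  assumes q: "integrable lborel q" and pos: "0 < measure lebesgue (hball h x t)"
  shows "\<bar>hball_integral h q t x - measure lebesgue (hball h x t) * q x\<bar>
           \<le> measure lebesgue (hball h x t) * enn2real (ball_mean_dev h q x t)"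
proof -
  define B where "B = hball h x t"
  define m where "m = measure lebesgue B"
  have B: "B \<in> sets lebesgue" using sets_hball by (simp add: B_def)
  have fin: "emeasure lebesgue B \<noteq> \<infinity>" using pos by (auto simp: B_def measure_def)
  have Phi: "Phi h x t = ennreal m"
    using fin by (simp add: Phi_def B_def m_def emeasure_eq_ennreal_measure)
  have "integrable lebesgue q" using q by (simp add: integrable_completion borel_measurable_integrable)
  then have qB: "set_integrable lebesgue B q"
    unfolding set_integrable_def by (rule integrable_mult_indicator[OF B])
  have cB: "set_integrable lebesgue B (\<lambda>_. q x)"
    unfolding set_integrable_def using integrable_real_indicator[OF B] fin
    by (simp add: less_top integrable_mult_left)
  have dev: "set_integrable lebesgue B (\<lambda>y. q y - q x)" using qB cB by (rule set_integral_diff(1))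
  define d where "d = (LINT y:B|lebesgue. \<bar>q y - q x\<bar>)"
  have "hball_integral h q t x - m * q x = (LINT y:B|lebesgue. q y - q x)"
    using set_integral_diff(2)[OF qB cB] set_integral_const[OF B fin, of "q x"]
    by (simp add: hball_integral_def B_def m_def)
  also have "\<bar>\<dots>\<bar> \<le> d"
    using set_integral_norm_bound[OF dev] by (simp add: d_def)
  finally have le: "\<bar>hball_integral h q t x - m * q x\<bar> \<le> d" .
  have d_nonneg: "0 \<le> d"
    unfolding d_def set_lebesgue_integral_def by (rule integral_nonneg_AE) simp
  have "(\<integral>\<^sup>+ y \<in> B. ennreal \<bar>q y - q x\<bar> \<partial>lebesgue) = ennreal d"
    using set_integrable_abs[OF dev] unfolding d_def set_lebesgue_integral_def set_integrable_def
    by (subst nn_integral_eq_integral[symmetric])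
       (auto simp: ennreal_mult indicator_def intro!: nn_integral_cong)
  then have "ball_mean_dev h q x t = ennreal (d / m)"
    using pos d_nonneg by (simp add: ball_mean_dev_def Phi B_def[symmetric] m_def divide_ennreal)
  then show ?thesis
    using le pos d_nonneg by (simp add: B_def[symmetric] m_def[symmetric])
qed

end

section \<open>The law of \<open>h(X, Y)\<close> for independent \<open>X\<close> and \<open>Y\<close> with densities\<close>

definition hdist_law ::
  "('a::euclidean_space \<Rightarrow> 'a \<Rightarrow> real) \<Rightarrow> ('a \<Rightarrow> real) \<Rightarrow> ('a \<Rightarrow> real) \<Rightarrow> real measure"
  where "hdist_law h p q =
    distr (density (lborel \<Otimes>\<^sub>M lborel) (\<lambda>(x, y). ennreal (p x) * ennreal (q y))) borel (\<lambda>(x, y). h x y)"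

lemma hdist_law_AE_cong:
  fixes p p' q q' :: "'a::euclidean_space \<Rightarrow> real"
  assumes [measurable]: "p \<in> borel_measurable lborel" "p' \<in> borel_measurable lborel"
    "q \<in> borel_measurable lborel" "q' \<in> borel_measurable lborel"
    and p_eq: "AE x in lborel. p x = p' x" and q_eq: "AE y in lborel. q y = q' y"
  shows "hdist_law h p q = hdist_law h p' q'"
proof -
  have "AE z in lborel \<Otimes>\<^sub>M lborel.
          ennreal (p (fst z)) * ennreal (q (snd z)) = ennreal (p' (fst z)) * ennreal (q' (snd z))"
  proof (rule lborel_pair.AE_pair_measure)
    show "{z \<in> space (lborel \<Otimes>\<^sub>M lborel). ennreal (p (fst z)) * ennreal (q (snd z)) =
            ennreal (p' (fst z)) * ennreal (q' (snd z))} \<in> sets (lborel \<Otimes>\<^sub>M lborel)"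
      by measurable
    show "AE x in lborel. AE y in lborel.
            ennreal (p (fst (x, y))) * ennreal (q (snd (x, y))) =
            ennreal (p' (fst (x, y))) * ennreal (q' (snd (x, y)))"
      using p_eq by eventually_elim (use q_eq in \<open>auto elim: eventually_mono\<close>)
  qed
  then show ?thesis
    unfolding hdist_law_def by (subst density_cong) (auto simp: case_prod_beta)
qed

lemma (in prob_space) integrable_density:
  assumes "distributed M lborel X (\<lambda>x. ennreal (p x))" and "\<And>x. 0 \<le> p x"
  shows "integrable lborel p"
  using distributed_integrable[OF assms(1), of "\<lambda>_. 1"] assms(2) by simp

lemma (in prob_space) indep_var_from_indep_vars:
  assumes "indep_vars (\<lambda>_. borel) X I" and "i \<in> I" "j \<in> I" "i \<noteq> j"
  shows "indep_var borel (X i) borel (X j)"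
proof -
  have "indep_var (PiM {i} (\<lambda>_. borel)) (\<lambda>\<omega>. restrict (\<lambda>k. X k \<omega>) {i})
                  (PiM {j} (\<lambda>_. borel)) (\<lambda>\<omega>. restrict (\<lambda>k. X k \<omega>) {j})"
    using assms by (intro indep_var_restrict) auto
  then have "indep_var borel ((\<lambda>f. f i) \<circ> (\<lambda>\<omega>. restrict (\<lambda>k. X k \<omega>) {i}))
                       borel ((\<lambda>f. f j) \<circ> (\<lambda>\<omega>. restrict (\<lambda>k. X k \<omega>) {j}))"
    by (rule indep_var_compose) auto
  then show ?thesis by (simp add: comp_def)
qed

context measurable_hdist
begin

lemma distr_hdist_eq_hdist_law:
  fixes M :: "'p measure" and X Y :: "'p \<Rightarrow> 'a"
  assumes "prob_space M"
    and X: "distributed M lborel X (\<lambda>x. ennreal (p x))"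
    and Y: "distributed M lborel Y (\<lambda>y. ennreal (q y))"
    and indep: "prob_space.indep_var M borel X borel Y"
  shows "distr M borel (\<lambda>\<omega>. h (X \<omega>) (Y \<omega>)) = hdist_law h p q"
proof -
  interpret prob_space M by fact
  have "indep_var lborel X lborel Y"
    using indep unfolding indep_var_eq by (simp add: measurable_lborel2)
  then have "distributed M (lborel \<Otimes>\<^sub>M lborel) (\<lambda>\<omega>. (X \<omega>, Y \<omega>))
               (\<lambda>(x, y). ennreal (p x) * ennreal (q y))"
    using X Y by (intro distributed_joint_indep) (auto intro: lborel.sigma_finite_measure_axioms)
  then show ?thesis
    using borel_measurable_pair_lborel[OF h_meas] unfolding hdist_law_def
    by (subst distributed_distr_eq_density[symmetric]) (auto simp: distr_distr comp_def)
qed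

lemma measure_hdist_law_lessThan:
  assumes [measurable]: "p \<in> borel_measurable lborel" and p_nonneg: "\<And>x. 0 \<le> p x"
    and q: "integrable lborel q" and q_nonneg: "\<And>y. 0 \<le> q y"
  shows "measure (hdist_law h p q) {..<t} = (\<integral>x. p x * hball_integral h q t x \<partial>lebesgue)"
proof -
  define S where "S = {z::'a \<times> 'a. h (fst z) (snd z) < t}"
  have [measurable]: "q \<in> borel_measurable lborel"
    "S \<in> sets (lborel \<Otimes>\<^sub>M lborel)" "hball_integral h q t \<in> borel_measurable lborel"
    using q sets_hdist_less borel_measurable_hball_integral by (auto simp: S_def)
  have I_nonneg: "0 \<le> hball_integral h q t x" for x
    using hball_integral_nonneg[OF borel_measurable_integrable[OF q] q_nonneg] .
  have "measure (hdist_law h p q) {..<t} =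
          measure (density (lborel \<Otimes>\<^sub>M lborel) (\<lambda>(x, y). ennreal (p x) * ennreal (q y))) S"
    unfolding hdist_law_def using borel_measurable_pair_lborel[OF h_meas]
    by (subst measure_distr) (auto simp: S_def vimage_def space_pair_measure case_prod_beta)
  also have "\<dots> = enn2real (\<integral>\<^sup>+z. ennreal (p (fst z)) * ennreal (q (snd z)) * indicator S z
                              \<partial>(lborel \<Otimes>\<^sub>M lborel))"
    unfolding measure_def
    using \<open>S \<in> sets (lborel \<Otimes>\<^sub>M lborel)\<close>[unfolded sets_pair_measure_cong[OF sets_lborel sets_lborel]]
    by (subst emeasure_density) (auto simp: case_prod_beta)
  also have "\<dots> = enn2real (\<integral>\<^sup>+x. \<integral>\<^sup>+y. ennreal (p x) * ennreal (q y) * indicator S (x, y) \<partial>lborel \<partial>lborel)"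
    by (subst lborel.nn_integral_fst[symmetric]) auto
  also have "\<dots> = enn2real (\<integral>\<^sup>+x. ennreal (p x * hball_integral h q t x) \<partial>lborel)"
  proof (intro arg_cong[where f=enn2real] nn_integral_cong)
    fix x
    have [measurable]: "hball h x t \<in> sets lborel" by (rule sets_hball)
    have "(\<integral>\<^sup>+y. ennreal (p x) * ennreal (q y) * indicator S (x, y) \<partial>lborel) =
            (\<integral>\<^sup>+y. ennreal (p x) * (ennreal (q y) * indicator (hball h x t) y) \<partial>lborel)"
      by (auto simp: S_def hball_def indicator_def mult.assoc intro!: nn_integral_cong)
    also have "\<dots> = ennreal (p x) * (\<integral>\<^sup>+y. ennreal (q y) * indicator (hball h x t) y \<partial>lborel)"
      by (rule nn_integral_cmult) measurable
    finally show "(\<integral>\<^sup>+y. ennreal (p x) * ennreal (q y) * indicator S (x, y) \<partial>lborel) =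
                    ennreal (p x * hball_integral h q t x)"
      by (simp add: nn_integral_hball_eq_hball_integral[OF q q_nonneg] ennreal_mult p_nonneg I_nonneg)
  qed
  also have "\<dots> = (\<integral>x. p x * hball_integral h q t x \<partial>lborel)"
    using I_nonneg p_nonneg by (subst integral_eq_nn_integral) auto
  finally show ?thesis by (simp add: integral_completion)
qed

end

section \<open>Comparable ball volumes\<close>

lemma delta_t_eq_measure:
  "delta_t h t x y = measure lebesgue (hball h x t) / measure lebesgue (hball h y t)"
  by (simp add: delta_t_def Phi_def measure_def)

lemma not_AE_False_lebesgue: "\<not> (AE x in (lebesgue :: 'a::euclidean_space measure). False)"
  by (simp add: AE_completion_iff trivial_limit_def[symmetric] ae_filter_eq_bot_iff)

locale hball_comparison = measurable_hdist +
  fixes \<xi> :: "'a::euclidean_space" and w :: "'a \<Rightarrow> real" and \<epsilon> c C :: real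
  assumes eps_pos: "0 < \<epsilon>" and c_pos: "0 < c" and C_pos: "0 < C" and w_pos: "\<And>x. 0 < w x"
    and comparable: "AE x in lebesgue. \<forall>t\<in>{0<..<\<epsilon>}.
                       c * w x \<le> delta_t h t x \<xi> \<and> delta_t h t x \<xi> \<le> C * w x"
begin

text \<open>
  \<open>delta_t\<close> is \<open>0\<close> when the ball around \<open>\<xi>\<close> is null (division by zero), which comparability
  forbids.
\<close>

lemma measure_hball_center_pos:
  assumes "0 < t" "t < \<epsilon>"
  shows "0 < measure lebesgue (hball h \<xi> t)"
proof (rule ccontr)
  assume "\<not> 0 < measure lebesgue (hball h \<xi> t)"
  then have "measure lebesgue (hball h \<xi> t) = 0"
    using measure_nonneg[of lebesgue "hball h \<xi> t"] by linarith
  then have zero: "delta_t h t x \<xi> = 0" for x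
    by (simp add: delta_t_eq_measure)
  have "AE x in (lebesgue :: 'a measure). False"
    using comparable
  proof eventually_elim
    case (elim x)
    then have "c * w x \<le> delta_t h t x \<xi>" using assms by simp
    then show False using zero c_pos w_pos[of x] by (simp add: mult_le_0_iff)
  qed
  then show False using not_AE_False_lebesgue by blast
qed

end

locale hball_comparison_densities = hball_comparison +
  fixes f g :: "'a::euclidean_space \<Rightarrow> real" and K :: real
  assumes f_nonneg: "\<And>x. 0 \<le> f x" and g_nonneg: "\<And>x. 0 \<le> g x"
    and f_int: "integrable lborel f" and g_int: "integrable lborel g"
    and fw_int: "integrable lebesgue (\<lambda>x. f x * w x)" and gw_int: "integrable lebesgue (\<lambda>x. g x * w x)"
    and K_pos: "0 < K"
    and dev_bounded: "AE x in lebesgue. \<forall>t\<in>{0<..<\<epsilon>}.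
                        ball_mean_dev h f x t < K \<and> ball_mean_dev h g x t < K"
    and dev_tendsto: "AE x in lebesgue. ((\<lambda>t. ball_mean_dev h f x t) \<longlongrightarrow> 0) (at_right 0) \<and>
                                        ((\<lambda>t. ball_mean_dev h g x t) \<longlongrightarrow> 0) (at_right 0)"
begin

definition cross_error :: "real \<Rightarrow> 'a \<Rightarrow> real" where
  "cross_error t x =
     f x * (hball_integral h f t x - measure lebesgue (hball h x t) * f x) +
     (g x - 2 * f x) * (hball_integral h g t x - measure lebesgue (hball h x t) * g x)"

abbreviation cross_error_ratio :: "real \<Rightarrow> 'a \<Rightarrow> real" where
  "cross_error_ratio t x \<equiv> \<bar>cross_error t x\<bar> / measure lebesgue (hball h \<xi> t)"

abbreviation weighted_sq_diff :: "real \<Rightarrow> 'a \<Rightarrow> real" where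
  "weighted_sq_diff t x \<equiv> delta_t h t x \<xi> * (f x - g x)\<^sup>2"

lemma cross_integrand_eq:
  "f x * hball_integral h f t x + g x * hball_integral h g t x - 2 * (f x * hball_integral h g t x)
     = measure lebesgue (hball h x t) * (f x - g x)\<^sup>2 + cross_error t x"
  by (simp add: cross_error_def power2_eq_square algebra_simps)

lemma borel_measurable_cross_error [measurable]: "cross_error t \<in> borel_measurable lebesgue"
proof -
  have [measurable]: "f \<in> borel_measurable lborel" "g \<in> borel_measurable lborel"
    "hball_integral h f t \<in> borel_measurable lborel" "hball_integral h g t \<in> borel_measurable lborel"
    "(\<lambda>x. measure lebesgue (hball h x t)) \<in> borel_measurable lborel"
    using f_int g_int borel_measurable_hball_integral borel_measurable_measure_hball
    by auto
  have "cross_error t \<in> borel_measurable lborel"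
    unfolding cross_error_def[abs_def] by measurable
  then show ?thesis by (rule measurable_completion)
qed

lemma cross_error_ratio_le_oscillation:
  "AE x in lebesgue. \<forall>t\<in>{0<..<\<epsilon>}. cross_error_ratio t x \<le>
     C * w x * (f x * enn2real (ball_mean_dev h f x t) + (g x + 2 * f x) * enn2real (ball_mean_dev h g x t))"
  using comparable
proof eventually_elim
  case (elim x)
  show ?case
  proof
    fix t assume t: "t \<in> {0<..<\<epsilon>}"
    define m where "m = measure lebesgue (hball h x t)"
    define P where "P = measure lebesgue (hball h \<xi> t)"
    define bf where "bf = enn2real (ball_mean_dev h f x t)"
    define bg where "bg = enn2real (ball_mean_dev h g x t)"
    have P: "0 < P" using measure_hball_center_pos t by (simp add: P_def)
    have ratio: "c * w x \<le> m / P" "m / P \<le> C * w x"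
      using elim t by (auto simp: delta_t_eq_measure m_def P_def)
    have "0 < m / P" using ratio(1) mult_pos_pos[OF c_pos w_pos[of x]] by linarith
    then have "0 < m" using P by (simp add: zero_less_divide_iff)
    then have dev: "\<bar>hball_integral h f t x - m * f x\<bar> \<le> m * bf"
      "\<bar>hball_integral h g t x - m * g x\<bar> \<le> m * bg"
      unfolding m_def bf_def bg_def using f_int g_int by (auto intro!: hball_integral_deviation_le)
    have "\<bar>cross_error t x\<bar> \<le> \<bar>f x * (hball_integral h f t x - m * f x)\<bar> +
            \<bar>(g x - 2 * f x) * (hball_integral h g t x - m * g x)\<bar>"
      unfolding cross_error_def m_def[symmetric] by (rule abs_triangle_ineq)
    also have "\<dots> \<le> f x * \<bar>hball_integral h f t x - m * f x\<bar> +
                    (g x + 2 * f x) * \<bar>hball_integral h g t x - m * g x\<bar>"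
      using f_nonneg[of x] g_nonneg[of x] by (auto simp: abs_mult intro!: add_left_mono mult_right_mono)
    also have "\<dots> \<le> f x * (m * bf) + (g x + 2 * f x) * (m * bg)"
      using dev f_nonneg[of x] g_nonneg[of x] by (intro add_mono mult_left_mono) auto
    also have "\<dots> = m * (f x * bf + (g x + 2 * f x) * bg)" by (simp add: algebra_simps)
    finally have "\<bar>cross_error t x\<bar> / P \<le> m / P * (f x * bf + (g x + 2 * f x) * bg)"
      using P by (simp add: divide_right_mono)
    also have "\<dots> \<le> C * w x * (f x * bf + (g x + 2 * f x) * bg)"
      using ratio f_nonneg[of x] g_nonneg[of x] by (intro mult_right_mono) (auto simp: bf_def bg_def)
    finally show "\<bar>cross_error t x\<bar> / P \<le> C * w x * (f x * bf + (g x + 2 * f x) * bg)" .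
  qed
qed

lemma cross_error_ratio_le_majorant:
  "AE x in lebesgue. \<forall>t\<in>{0<..<\<epsilon>}.
     cross_error_ratio t x \<le> C * K * (3 * (f x * w x) + g x * w x)"
  using cross_error_ratio_le_oscillation dev_bounded
proof eventually_elim
  case (elim x)
  show ?case
  proof
    fix t assume t: "t \<in> {0<..<\<epsilon>}"
    have "ball_mean_dev h f x t < K" "ball_mean_dev h g x t < K" using elim(2) t by auto
    then have "enn2real (ball_mean_dev h f x t) \<le> K" "enn2real (ball_mean_dev h g x t) \<le> K"
      using K_pos by (meson enn2real_leI less_imp_le)+
    then have "f x * enn2real (ball_mean_dev h f x t) + (g x + 2 * f x) * enn2real (ball_mean_dev h g x t)
                 \<le> f x * K + (g x + 2 * f x) * K"
      using f_nonneg[of x] g_nonneg[of x] by (intro add_mono mult_left_mono) auto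
    then have "C * w x * (f x * enn2real (ball_mean_dev h f x t) + (g x + 2 * f x) * enn2real (ball_mean_dev h g x t))
                 \<le> C * w x * (f x * K + (g x + 2 * f x) * K)"
      using C_pos w_pos[of x] by (intro mult_left_mono) auto
    moreover have "cross_error_ratio t x \<le>
        C * w x * (f x * enn2real (ball_mean_dev h f x t) + (g x + 2 * f x) * enn2real (ball_mean_dev h g x t))"
      using elim(1) t by blast
    ultimately show "cross_error_ratio t x \<le> C * K * (3 * (f x * w x) + g x * w x)"
      by (simp add: algebra_simps)
  qed
qed

lemma integrable_cross_error_ratio:
  assumes "0 < t" "t < \<epsilon>"
  shows "integrable lebesgue (\<lambda>x. cross_error_ratio t x)"
proof (rule Bochner_Integration.integrable_bound)
  show "integrable lebesgue (\<lambda>x. C * K * (3 * (f x * w x) + g x * w x))"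
    using fw_int gw_int by auto
  show "AE x in lebesgue. norm (cross_error_ratio t x)
                          \<le> norm (C * K * (3 * (f x * w x) + g x * w x))"
    using cross_error_ratio_le_majorant
    by eventually_elim (use assms in \<open>auto intro: order_trans[OF _ abs_ge_self]\<close>)
qed simp

lemma integral_cross_error_ratio_tendsto_0:
  "((\<lambda>t. \<integral>x. cross_error_ratio t x \<partial>lebesgue) \<longlongrightarrow> 0) (at_right 0)"
proof (rule tendsto_at_right_sequentially[OF eps_pos])
  fix S :: "nat \<Rightarrow> real"
  assume S: "\<And>n. 0 < S n" "\<And>n. S n < \<epsilon>" "decseq S" "S \<longlonglongrightarrow> 0"
  have S_at_right: "filterlim S (at_right 0) sequentially"
    using S by (intro tendsto_imp_filterlim_at_right) auto
  have "(\<lambda>n. \<integral>x. cross_error_ratio (S n) x \<partial>lebesgue)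
          \<longlonglongrightarrow> (\<integral>x. 0 \<partial>(lebesgue :: 'a measure))"
  proof (rule integral_dominated_convergence[where w="\<lambda>x. C * K * (3 * (f x * w x) + g x * w x)"
        and s="\<lambda>n x. cross_error_ratio (S n) x" and f="\<lambda>x. 0"])
    show "integrable lebesgue (\<lambda>x. C * K * (3 * (f x * w x) + g x * w x))"
      using fw_int gw_int by auto
    show "AE x in lebesgue. norm (cross_error_ratio (S n) x)
                            \<le> C * K * (3 * (f x * w x) + g x * w x)" for n
      using cross_error_ratio_le_majorant by eventually_elim (use S(1,2)[of n] in auto)
    show "AE x in lebesgue. (\<lambda>n. cross_error_ratio (S n) x) \<longlonglongrightarrow> 0"
      using cross_error_ratio_le_oscillation dev_tendsto
    proof eventually_elim
      case (elim x)
      have lim: "(\<lambda>n. enn2real (ball_mean_dev h f x (S n))) \<longlonglongrightarrow> 0"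
           "(\<lambda>n. enn2real (ball_mean_dev h g x (S n))) \<longlonglongrightarrow> 0"
        using filterlim_compose[OF elim(2)[THEN conjunct1] S_at_right]
          filterlim_compose[OF elim(2)[THEN conjunct2] S_at_right]
        by (simp_all add: tendsto_enn2real[where l=0, simplified])
      have upper_lim: "(\<lambda>n. C * w x * (f x * enn2real (ball_mean_dev h f x (S n)) +
                   (g x + 2 * f x) * enn2real (ball_mean_dev h g x (S n)))) \<longlonglongrightarrow> 0"
        by (intro tendsto_mult_right_zero tendsto_add_zero lim)
      have upper_bound: "cross_error_ratio (S n) x \<le>
          C * w x * (f x * enn2real (ball_mean_dev h f x (S n)) +
                     (g x + 2 * f x) * enn2real (ball_mean_dev h g x (S n)))" for n
        using elim(1) S(1,2)[of n] by simp
      show ?case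
        by (rule tendsto_sandwich[OF always_eventually always_eventually tendsto_const upper_lim])
           (use upper_bound in auto)
    qed
  qed simp_all
  then show "(\<lambda>n. \<integral>x. cross_error_ratio (S n) x \<partial>lebesgue) \<longlonglongrightarrow> 0"
    by simp
qed

lemma integrable_cross_error:
  assumes "0 < t" "t < \<epsilon>"
  shows "integrable lebesgue (cross_error t)"
proof -
  have "integrable lebesgue (\<lambda>x. measure lebesgue (hball h \<xi> t) * cross_error_ratio t x)"
    using integrable_cross_error_ratio[OF assms] by (rule integrable_mult_right)
  then show ?thesis
    using measure_hball_center_pos[OF assms] by (simp add: integrable_abs_iff[OF borel_measurable_cross_error])
qed

lemma integrable_weighted_sq_diff:
  assumes t: "0 < t" "t < \<epsilon>"
  shows "integrable lebesgue (weighted_sq_diff t)"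
proof -
  have "integrable lebesgue (\<lambda>x. f x * hball_integral h f t x + g x * hball_integral h g t x
                                  - 2 * (f x * hball_integral h g t x))"
    using f_int g_int by (auto intro!: integrable_mult_hball_integral)
  then have "integrable lebesgue (\<lambda>x. (f x * hball_integral h f t x + g x * hball_integral h g t x
      - 2 * (f x * hball_integral h g t x) - cross_error t x) / measure lebesgue (hball h \<xi> t))"
    using integrable_cross_error[OF t] by auto
  then show ?thesis by (simp add: cross_integrand_eq delta_t_eq_measure)
qed

lemma integral_weighted_sq_diff_le:
  assumes t: "0 < t" "t < \<epsilon>"
    and eq_ff: "(\<integral>x. f x * hball_integral h f t x \<partial>lebesgue) = (\<integral>x. f x * hball_integral h g t x \<partial>lebesgue)"
    and eq_gg: "(\<integral>x. g x * hball_integral h g t x \<partial>lebesgue) = (\<integral>x. f x * hball_integral h g t x \<partial>lebesgue)"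
  shows "integral\<^sup>L lebesgue (weighted_sq_diff t) \<le> integral\<^sup>L lebesgue (cross_error_ratio t)"
proof -
  define P where "P = measure lebesgue (hball h \<xi> t)"
  define F where "F x = f x * hball_integral h f t x + g x * hball_integral h g t x
                          - 2 * (f x * hball_integral h g t x)" for x
  have P: "0 < P" using measure_hball_center_pos t by (simp add: P_def)
  note int_fI = integrable_mult_hball_integral
  have F_int: "integrable lebesgue F" and F_zero: "integral\<^sup>L lebesgue F = 0"
    using int_fI[OF f_int f_int] int_fI[OF g_int g_int] int_fI[OF f_int g_int] eq_ff eq_gg
    by (simp_all add: F_def[abs_def])
  note E_int = integrable_cross_error[OF t]
  have D_eq: "weighted_sq_diff t x = (F x - cross_error t x) / P" for x
    using cross_integrand_eq[of x t] by (simp add: F_def P_def delta_t_eq_measure)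
  have "integral\<^sup>L lebesgue (weighted_sq_diff t) = - (\<integral>x. cross_error t x \<partial>lebesgue) / P"
    unfolding D_eq using F_int E_int F_zero by simp
  also have "\<dots> \<le> (\<integral>x. \<bar>cross_error t x\<bar> \<partial>lebesgue) / P"
    using P integral_abs_bound[of lebesgue "\<lambda>x. cross_error t x"]
    by (intro divide_right_mono) (auto simp: abs_le_iff)
  finally show ?thesis by (simp add: P_def)
qed

lemma integral_weighted_sq_diff_comparable:
  assumes s: "0 < s" "s < \<epsilon>" and t: "0 < t" "t < \<epsilon>"
  shows "c / C * integral\<^sup>L lebesgue (weighted_sq_diff s) \<le> integral\<^sup>L lebesgue (weighted_sq_diff t)"
  unfolding integral_mult_right_zero[symmetric]
proof (rule integral_mono_AE)
  show "AE x in lebesgue. c / C * weighted_sq_diff s x \<le> weighted_sq_diff t x"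
    using comparable
  proof eventually_elim
    case (elim x)
    then have up: "delta_t h s x \<xi> \<le> C * w x" and low: "c * w x \<le> delta_t h t x \<xi>"
      using s t by auto
    have "c / C * delta_t h s x \<xi> \<le> c / C * (C * w x)"
      using c_pos C_pos by (intro mult_left_mono[OF up]) simp
    also have "\<dots> = c * w x" using C_pos by simp
    finally have "c / C * delta_t h s x \<xi> \<le> delta_t h t x \<xi>" using low by linarith
    from mult_right_mono[OF this zero_le_power2[of "f x - g x"]]
    show ?case by (simp add: mult.assoc)
  qed
  show "integrable lebesgue (\<lambda>x. c / C * weighted_sq_diff s x)"
    using integrable_weighted_sq_diff[OF s] by simp
  show "integrable lebesgue (weighted_sq_diff t)"
    using integrable_weighted_sq_diff[OF t] .
qed

text \<open>
  The weight \<open>w\<close> need not be measurable, so the limit argument compares against the measurable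
  weight \<open>delta_t h s \<cdot> \<xi>\<close> at a fixed radius \<open>s\<close> instead.
\<close>

theorem AE_eq_if_hball_integrals_eq:
  assumes eq_ff: "\<And>t. 0 < t \<Longrightarrow> t < \<epsilon> \<Longrightarrow>
      (\<integral>x. f x * hball_integral h f t x \<partial>lebesgue) = (\<integral>x. f x * hball_integral h g t x \<partial>lebesgue)"
    and eq_gg: "\<And>t. 0 < t \<Longrightarrow> t < \<epsilon> \<Longrightarrow>
      (\<integral>x. g x * hball_integral h g t x \<partial>lebesgue) = (\<integral>x. f x * hball_integral h g t x \<partial>lebesgue)"
  shows "AE x in lebesgue. f x = g x"
proof -
  define s where "s = \<epsilon> / 2"
  have s: "0 < s" "s < \<epsilon>" using eps_pos by (simp_all add: s_def)
  have "c / C * integral\<^sup>L lebesgue (weighted_sq_diff s) \<le> integral\<^sup>L lebesgue (cross_error_ratio t)"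
    if "0 < t" "t < \<epsilon>" for t
    using integral_weighted_sq_diff_comparable[OF s that]
      integral_weighted_sq_diff_le[OF that eq_ff[OF that] eq_gg[OF that]] by (rule order_trans)
  then have "c / C * integral\<^sup>L lebesgue (weighted_sq_diff s) \<le> 0"
    by (intro tendsto_lowerbound[OF integral_cross_error_ratio_tendsto_0] eventually_at_rightI[OF _ eps_pos])
       auto
  then have "integral\<^sup>L lebesgue (weighted_sq_diff s) \<le> 0"
    using divide_pos_pos[OF c_pos C_pos] by (meson mult_pos_pos not_le)
  moreover have nonneg: "0 \<le> weighted_sq_diff s x" for x by (simp add: delta_t_eq_measure)
  then have "0 \<le> integral\<^sup>L lebesgue (weighted_sq_diff s)" by (simp add: integral_nonneg_AE)
  ultimately have "integral\<^sup>L lebesgue (weighted_sq_diff s) = 0" by (rule order.antisym)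
  then have "AE x in lebesgue. weighted_sq_diff s x = 0"
    using integral_nonneg_eq_0_iff_AE[OF integrable_weighted_sq_diff[OF s]] nonneg by simp
  then show ?thesis
    using comparable
  proof eventually_elim
    case (elim x)
    then have "c * w x \<le> delta_t h s x \<xi>" using s by simp
    then have "0 < delta_t h s x \<xi>" using mult_pos_pos[OF c_pos w_pos[of x]] by linarith
    then show "f x = g x" using elim(1) by simp
  qed
qed

end

section \<open>Densities with bounded oscillation\<close>

lemma osc_uniformly_boundedE:
  assumes "osc_uniformly_bounded h f"
  obtains \<epsilon> K where "0 < \<epsilon>" "0 < K"
    "AE x in lebesgue. \<forall>t\<in>{0<..<\<epsilon>}. ball_mean_dev h f x t < ennreal K"
proof -
  obtain \<epsilon> K where "0 < \<epsilon>" "0 < K" and osc: "AE x in lebesgue. centered_osc h f x \<epsilon> < ennreal K"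
    using assms unfolding osc_uniformly_bounded_def by blast
  moreover have "AE x in lebesgue. \<forall>t\<in>{0<..<\<epsilon>}. ball_mean_dev h f x t < ennreal K"
    using osc by eventually_elim (auto simp: centered_osc_def intro: le_less_trans[OF SUP_upper])
  ultimately show ?thesis using that by blast
qed

context measurable_hdist
begin

lemma vr_comparable_AE_eq_if_hball_integrals_eq:
  fixes f g :: "'a \<Rightarrow> real"
  assumes comp: "vr_comparable h \<xi> \<delta>"
    and f_nonneg: "\<And>x. 0 \<le> f x" and g_nonneg: "\<And>x. 0 \<le> g x"
    and f_int: "integrable lborel f" and g_int: "integrable lborel g"
    and f_diff: "AE x in lebesgue. lebesgue_differentiable_at h f x"
    and g_diff: "AE x in lebesgue. lebesgue_differentiable_at h g x"
    and f_osc: "osc_uniformly_bounded h f" and g_osc: "osc_uniformly_bounded h g"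
    and f_L1: "integrable lebesgue (\<lambda>x. f x * \<delta> x \<xi>)"
    and g_L1: "integrable lebesgue (\<lambda>x. g x * \<delta> x \<xi>)"
    and eq_ff: "\<And>t. 0 < t \<Longrightarrow>
      (\<integral>x. f x * hball_integral h f t x \<partial>lebesgue) = (\<integral>x. f x * hball_integral h g t x \<partial>lebesgue)"
    and eq_gg: "\<And>t. 0 < t \<Longrightarrow>
      (\<integral>x. g x * hball_integral h g t x \<partial>lebesgue) = (\<integral>x. f x * hball_integral h g t x \<partial>lebesgue)"
  shows "AE x in lebesgue. f x = g x"
proof -
  obtain \<epsilon>\<^sub>0 c C where \<epsilon>\<^sub>0: "0 < \<epsilon>\<^sub>0" and c: "0 < c" and C: "0 < C" and \<delta>_pos: "\<And>a b. 0 < \<delta> a b"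
    and comparable: "AE x in lebesgue. \<forall>t. 0 < t \<and> t < \<epsilon>\<^sub>0 \<longrightarrow>
                       c * \<delta> x \<xi> \<le> delta_t h t x \<xi> \<and> delta_t h t x \<xi> \<le> C * \<delta> x \<xi>"
    using comp unfolding vr_comparable_def by blast
  obtain \<epsilon>\<^sub>f K\<^sub>f where \<epsilon>\<^sub>f: "0 < \<epsilon>\<^sub>f" and K\<^sub>f: "0 < K\<^sub>f"
    and dev_f: "AE x in lebesgue. \<forall>t\<in>{0<..<\<epsilon>\<^sub>f}. ball_mean_dev h f x t < ennreal K\<^sub>f"
    using f_osc by (rule osc_uniformly_boundedE)
  obtain \<epsilon>\<^sub>g K\<^sub>g where \<epsilon>\<^sub>g: "0 < \<epsilon>\<^sub>g" and "0 < K\<^sub>g"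
    and dev_g: "AE x in lebesgue. \<forall>t\<in>{0<..<\<epsilon>\<^sub>g}. ball_mean_dev h g x t < ennreal K\<^sub>g"
    using g_osc by (rule osc_uniformly_boundedE)
  define \<epsilon> where "\<epsilon> = min \<epsilon>\<^sub>0 (min \<epsilon>\<^sub>f \<epsilon>\<^sub>g)"
  define K where "K = max K\<^sub>f K\<^sub>g"
  interpret hball_comparison_densities h \<xi> "\<lambda>x. \<delta> x \<xi>" \<epsilon> c C f g K
  proof unfold_locales
    show "AE x in lebesgue. \<forall>t\<in>{0<..<\<epsilon>}.
            c * \<delta> x \<xi> \<le> delta_t h t x \<xi> \<and> delta_t h t x \<xi> \<le> C * \<delta> x \<xi>"
      using comparable by eventually_elim (simp add: \<epsilon>_def)
    show "AE x in lebesgue. \<forall>t\<in>{0<..<\<epsilon>}. ball_mean_dev h f x t < K \<and> ball_mean_dev h g x t < K"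
      using dev_f dev_g
    proof eventually_elim
      case (elim x)
      have "ennreal K\<^sub>f \<le> ennreal K" "ennreal K\<^sub>g \<le> ennreal K"
        by (simp_all add: K_def ennreal_leI)
      with elim show ?case
        by (auto simp: \<epsilon>_def intro: less_le_trans)
    qed
    show "AE x in lebesgue. ((\<lambda>t. ball_mean_dev h f x t) \<longlongrightarrow> 0) (at_right 0) \<and>
                            ((\<lambda>t. ball_mean_dev h g x t) \<longlongrightarrow> 0) (at_right 0)"
      using f_diff g_diff by eventually_elim (simp add: lebesgue_differentiable_at_def)
  qed (use \<epsilon>\<^sub>0 \<epsilon>\<^sub>f \<epsilon>\<^sub>g c C \<delta>_pos K\<^sub>f f_nonneg g_nonneg f_int g_int f_L1 g_L1
        in \<open>auto simp: \<epsilon>_def K_def\<close>)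
  show ?thesis
    by (rule AE_eq_if_hball_integrals_eq) (use eq_ff eq_gg in auto)
qed

lemma AE_eq_iff_hdist_laws_eq:
  fixes f g :: "'a \<Rightarrow> real"
  assumes comp: "vr_comparable h \<xi> \<delta>"
    and f_nonneg: "\<And>x. 0 \<le> f x" and g_nonneg: "\<And>x. 0 \<le> g x"
    and f_int: "integrable lborel f" and g_int: "integrable lborel g"
    and f_diff: "AE x in lebesgue. lebesgue_differentiable_at h f x"
    and g_diff: "AE x in lebesgue. lebesgue_differentiable_at h g x"
    and f_osc: "osc_uniformly_bounded h f" and g_osc: "osc_uniformly_bounded h g"
    and f_L1: "integrable lebesgue (\<lambda>x. f x * \<delta> x \<xi>)"
    and g_L1: "integrable lebesgue (\<lambda>x. g x * \<delta> x \<xi>)"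
  shows "(AE x in lebesgue. f x = g x) \<longleftrightarrow>
           hdist_law h f f = hdist_law h g g \<and> hdist_law h g g = hdist_law h f g"
proof
  have [measurable]: "f \<in> borel_measurable lborel" "g \<in> borel_measurable lborel"
    using f_int g_int by auto
  assume "AE x in lebesgue. f x = g x"
  then have "AE x in lborel. f x = g x" by (simp add: AE_completion_iff)
  then show "hdist_law h f f = hdist_law h g g \<and> hdist_law h g g = hdist_law h f g"
    by (auto intro!: hdist_law_AE_cong elim: eventually_mono)
next
  note law_lessThan = measure_hdist_law_lessThan[OF borel_measurable_integrable]
  assume "hdist_law h f f = hdist_law h g g \<and> hdist_law h g g = hdist_law h f g"
  then show "AE x in lebesgue. f x = g x"
    using law_lessThan[OF f_int f_nonneg f_int f_nonneg] law_lessThan[OF g_int g_nonneg g_int g_nonneg]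
      law_lessThan[OF f_int f_nonneg g_int g_nonneg]
    by (intro vr_comparable_AE_eq_if_hball_integrals_eq[OF comp f_nonneg g_nonneg f_int g_int
          f_diff g_diff f_osc g_osc f_L1 g_L1]) metis+
qed

end

theorem theorem3:
  fixes h :: "'a::euclidean_space \<Rightarrow> 'a \<Rightarrow> real"
    and \<delta> :: "'a \<Rightarrow> 'a \<Rightarrow> real"
    and \<xi> :: 'a
    and M :: "'p measure"
    and X Y :: "nat \<Rightarrow> 'p \<Rightarrow> 'a"
    and f g :: "'a \<Rightarrow> real"
  assumes vr: "volume_regular h"
    and comp: "vr_comparable h \<xi> \<delta>"
    and h_meas: "(\<lambda>(x, y). h x y) \<in> borel_measurable (borel \<Otimes>\<^sub>M borel)"
    and ps: "prob_space M"
    and f_nonneg: "\<And>x. 0 \<le> f x" and g_nonneg: "\<And>x. 0 \<le> g x"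
    and X_distr: "\<And>i. i \<in> {1,2,3} \<Longrightarrow> distributed M lborel (X i) (\<lambda>x. ennreal (f x))"
    and Y_distr: "\<And>i. i \<in> {1,2,3} \<Longrightarrow> distributed M lborel (Y i) (\<lambda>x. ennreal (g x))"
    and X_indep: "prob_space.indep_vars M (\<lambda>_. borel) X {1,2,3}"
    and Y_indep: "prob_space.indep_vars M (\<lambda>_. borel) Y {1,2,3}"
    and XY_indep: "\<And>i j. i \<in> {1,2,3} \<Longrightarrow> j \<in> {1,2,3} \<Longrightarrow>
                     prob_space.indep_var M borel (X i) borel (Y j)"
    and f_diff: "AE x in lebesgue. lebesgue_differentiable_at h f x"
    and g_diff: "AE x in lebesgue. lebesgue_differentiable_at h g x"
    and f_osc: "osc_uniformly_bounded h f"
    and g_osc: "osc_uniformly_bounded h g"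
    and f_L1: "integrable lebesgue (\<lambda>x. f x * \<delta> x \<xi>)"
    and g_L1: "integrable lebesgue (\<lambda>x. g x * \<delta> x \<xi>)"
    and f2_L1: "integrable lebesgue (\<lambda>x. (f x)\<^sup>2 * \<delta> x \<xi>)"
    and g2_L1: "integrable lebesgue (\<lambda>x. (g x)\<^sup>2 * \<delta> x \<xi>)"
  shows "(AE x in lebesgue. f x = g x) \<longleftrightarrow>
           (distr M borel (\<lambda>\<omega>. h (X 1 \<omega>) (X 2 \<omega>)) = distr M borel (\<lambda>\<omega>. h (Y 1 \<omega>) (Y 2 \<omega>)) \<and>
            distr M borel (\<lambda>\<omega>. h (Y 1 \<omega>) (Y 2 \<omega>)) = distr M borel (\<lambda>\<omega>. h (X 3 \<omega>) (Y 3 \<omega>)))"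
proof -
  interpret prob_space M by (fact ps)
  interpret measurable_hdist h by unfold_locales (fact h_meas)
  have indep: "indep_var borel (X 1) borel (X 2)" "indep_var borel (Y 1) borel (Y 2)"
      "indep_var borel (X 3) borel (Y 3)"
    using indep_var_from_indep_vars[OF X_indep] indep_var_from_indep_vars[OF Y_indep] XY_indep
    by auto
  have laws: "distr M borel (\<lambda>\<omega>. h (X 1 \<omega>) (X 2 \<omega>)) = hdist_law h f f"
    "distr M borel (\<lambda>\<omega>. h (Y 1 \<omega>) (Y 2 \<omega>)) = hdist_law h g g"
    "distr M borel (\<lambda>\<omega>. h (X 3 \<omega>) (Y 3 \<omega>)) = hdist_law h f g"
    using distr_hdist_eq_hdist_law[OF ps X_distr X_distr indep(1)]
      distr_hdist_eq_hdist_law[OF ps Y_distr Y_distr indep(2)]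
      distr_hdist_eq_hdist_law[OF ps X_distr Y_distr indep(3)] by simp_all
  have "integrable lborel f" "integrable lborel g"
    using integrable_density[OF X_distr f_nonneg] integrable_density[OF Y_distr g_nonneg] by auto
  then show ?thesis
    unfolding laws by (intro AE_eq_iff_hdist_laws_eq[OF comp f_nonneg g_nonneg _ _
        f_diff g_diff f_osc g_osc f_L1 g_L1])
qed

end
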